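(* Let $x_1,\ldots,x_m$ be arbitrary positive integers and let $ES(x_1,\ldots,x_m)$ denote the number of sign vectors $(\varepsilon_1,\ldots,\varepsilon_m)\in\{-1,1\}^m$ with $\sum_{i=1}^m\varepsilon_i x_i=0$. Then $$ES(x_1,\ldots,x_m)\le 2^m\left(\frac{(2m-1)!!}{(2m)!!}\right)^{1/2}=\left(2\binom{2m-1}{m}\right)^{1/2}.$$ In particular, for every positive integer $m$, $J_m\le\left(2\binom{2m+1}{m+1}\right)^{1/2}$, where $J_m$ is the number of $(\delta_0,\ldots,\delta_m)\in\{-1,1\}^{m+1}$ with $\sum_{i=0}^m\delta_i\binom{m}{i}=0$.
   Context: $k!!$ denotes the double factorial, the product of all positive integers $\le k$ having the same parity as $k$. *)

theory Defs
  imports "HOL-Library.FuncSet" Complex_Main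
begin

fun dfact :: "nat \<Rightarrow> nat" where
  "dfact 0 = 1"
| "dfact (Suc 0) = 1"
| "dfact (Suc (Suc n)) = Suc (Suc n) * dfact n"

text \<open>ES x m: number of sign vectors (e_0,...,e_{m-1}) in {-1,1}^m with sum e_i x_i = 0
  (indices shifted to 0..m-1).\<close>
definition ES :: "(nat \<Rightarrow> int) \<Rightarrow> nat \<Rightarrow> nat" where
  "ES x m = card {e \<in> {..<m} \<rightarrow>\<^sub>E {-1, 1}. (\<Sum>i<m. e i * x i) = 0}"

definition J :: "nat \<Rightarrow> nat" where
  "J m = card {d \<in> {..m} \<rightarrow>\<^sub>E {-1, 1}. (\<Sum>i\<le>m. d i * int (m choose i)) = 0}"

end

theory Submission
  imports Defs "HOL-Combinatorics.Multiset_Permutations"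
begin

text \<open>For positive weights, the set of indices carrying the sign \<open>+1\<close> in a zero-sum sign
  vector has weight exactly half the total weight, so these sets form an antichain of subsets
  of the index set. Sperner's theorem bounds their number by \<open>m choose (m div 2)\<close>, whose
  square is at most \<open>\<Sum>k. (m choose k)\<^sup>2 = (2m) choose m\<close>. The double factorial
  expression is the square root of \<open>(2m) choose m\<close>, and \<open>J m\<close> is \<open>ES\<close> evaluated at the
  \<open>m + 1\<close> binomial coefficients of order \<open>m\<close>.\<close>

lemma card_permutations_with_initial_set:
  assumes "finite U" and "A \<subseteq> U"
  shows "card {\<sigma> \<in> permutations_of_set U. set (take (card A) \<sigma>) = A}
         = fact (card A) * fact (card U - card A)"
proof -
  let ?S = "{\<sigma> \<in> permutations_of_set U. set (take (card A) \<sigma>) = A}"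
  let ?T = "permutations_of_set A \<times> permutations_of_set (U - A)"
  have "?S = (\<lambda>(p, q). p @ q) ` ?T"
  proof (intro equalityI subsetI)
    fix \<sigma> assume "\<sigma> \<in> ?S"
    hence d: "distinct \<sigma>" and "set \<sigma> = U" and st: "set (take (card A) \<sigma>) = A"
      by (auto dest: permutations_of_setD)
    moreover have "set (take (card A) \<sigma>) \<inter> set (drop (card A) \<sigma>) = {}"
      using d by (simp add: set_take_disj_set_drop_if_distinct)
    moreover have "set (take (card A) \<sigma>) \<union> set (drop (card A) \<sigma>) = set \<sigma>"
      by (metis append_take_drop_id set_append)
    ultimately have "set (drop (card A) \<sigma>) = U - A" by blast
    hence "(take (card A) \<sigma>, drop (card A) \<sigma>) \<in> ?T"
      using st d by (auto intro!: permutations_of_setI)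
    thus "\<sigma> \<in> (\<lambda>(p, q). p @ q) ` ?T"
      by (metis (no_types, lifting) append_take_drop_id case_prod_conv image_eqI)
  next
    fix \<sigma> assume "\<sigma> \<in> (\<lambda>(p, q). p @ q) ` ?T"
    then obtain p q where pq: "p \<in> permutations_of_set A" "q \<in> permutations_of_set (U - A)"
      and \<sigma>: "\<sigma> = p @ q" by auto
    have "length p = card A" using pq(1) by (rule length_finite_permutations_of_set)
    moreover have "set p = A" "distinct p" "set q = U - A" "distinct q"
      using pq by (auto dest: permutations_of_setD)
    ultimately show "\<sigma> \<in> ?S" using \<sigma> assms(2) by (auto intro!: permutations_of_setI)
  qed
  moreover have "inj_on (\<lambda>(p, q). p @ q) ?T"
    by (rule inj_onI) (auto dest!: length_finite_permutations_of_set)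
  ultimately have "card ?S = card ?T" by (simp add: card_image)
  also have "\<dots> = fact (card A) * fact (card U - card A)"
    using assms finite_subset[OF assms(2,1)] by (simp add: card_cartesian_product card_Diff_subset)
  finally show ?thesis .
qed

text \<open>Lubell's proof: distinct members of an antichain are initial segments of disjoint sets of
  orderings of \<open>U\<close>, and a set of size \<open>k\<close> is an initial segment of
  \<open>k! (n - k)! \<ge> n! / (n choose (n div 2))\<close> orderings.\<close>

theorem sperner:
  assumes "finite U" and "F \<subseteq> Pow U" and antichain: "\<And>A B. A \<in> F \<Longrightarrow> B \<in> F \<Longrightarrow> A \<subseteq> B \<Longrightarrow> A = B"
  shows "card F \<le> card U choose (card U div 2)"
proof -
  let ?n = "card U" and ?M = "card U choose (card U div 2)"
  define C where "C A = {\<sigma> \<in> permutations_of_set U. set (take (card A) \<sigma>) = A}" for A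
  have "finite F" using assms(1,2) by (meson finite_Pow_iff finite_subset)
  have disjoint: "C A \<inter> C B = {}" if "A \<in> F" "B \<in> F" "A \<noteq> B" for A B
  proof (rule ccontr)
    assume "C A \<inter> C B \<noteq> {}"
    then obtain \<sigma> where "set (take (card A) \<sigma>) = A" "set (take (card B) \<sigma>) = B"
      unfolding C_def by blast
    hence "A \<subseteq> B \<or> B \<subseteq> A" by (metis nat_le_linear set_take_subset_set_take)
    thus False using antichain that by blast
  qed
  have fact_le: "fact ?n \<le> card (C A) * ?M" if "A \<in> F" for A
  proof -
    have "A \<subseteq> U" using that assms(2) by blast
    hence "card A \<le> ?n" and "card (C A) = fact (card A) * fact (?n - card A)"
      using assms(1) card_permutations_with_initial_set unfolding C_def by (auto intro: card_mono)
    hence "fact ?n = card (C A) * (?n choose card A)" by (simp add: binomial_fact_lemma)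
    also have "\<dots> \<le> card (C A) * ?M" by (simp add: binomial_maximum)
    finally show ?thesis .
  qed
  have "card F * fact ?n = (\<Sum>A\<in>F. fact ?n)" by simp
  also have "\<dots> \<le> (\<Sum>A\<in>F. card (C A) * ?M)" by (rule sum_mono) (rule fact_le)
  also have "\<dots> = (\<Sum>A\<in>F. card (C A)) * ?M" by (rule sum_distrib_right[symmetric])
  also have "(\<Sum>A\<in>F. card (C A)) = card (\<Union>A\<in>F. C A)"
    using \<open>finite F\<close> disjoint by (subst card_UN_disjoint) (auto simp: C_def)
  also have "\<dots> \<le> card (permutations_of_set U)"
    using assms(1) by (intro card_mono) (auto simp: C_def)
  finally have "card F * fact ?n \<le> fact ?n * ?M" using assms(1) by simp
  thus ?thesis by (simp add: mult.commute)
qed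

lemma inj_on_PiE_two_values:
  "inj_on (\<lambda>e. {i \<in> I. e i = b}) (I \<rightarrow>\<^sub>E {a, b})"
proof (rule inj_onI)
  fix e e' assume e: "e \<in> I \<rightarrow>\<^sub>E {a, b}" and e': "e' \<in> I \<rightarrow>\<^sub>E {a, b}"
    and eq: "{i \<in> I. e i = b} = {i \<in> I. e' i = b}"
  show "e = e'"
  proof (rule PiE_ext[OF e e'])
    fix i assume "i \<in> I"
    hence "e i = b \<longleftrightarrow> e' i = b" using eq by blast
    moreover have "e i \<in> {a, b}" "e' i \<in> {a, b}" using e e' \<open>i \<in> I\<close> by auto
    ultimately show "e i = e' i" by auto
  qed
qed

lemma sum_sign_vector:
  fixes x :: "'a \<Rightarrow> 'b::comm_ring_1"
  assumes "finite I" and "e \<in> I \<rightarrow>\<^sub>E {-1, 1}"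
  shows "(\<Sum>i\<in>I. e i * x i) = 2 * sum x {i \<in> I. e i = 1} - sum x I"
proof -
  have "(\<Sum>i\<in>I. e i * x i) = (\<Sum>i\<in>I. 2 * (if e i = 1 then x i else 0) - x i)"
    using assms by (intro sum.cong) (auto simp: PiE_iff)
  also have "\<dots> = 2 * sum x {i \<in> I. e i = 1} - sum x I"
    using assms(1) by (simp add: sum_subtractf sum_distrib_left sum.inter_filter)
  finally show ?thesis .
qed

lemma subset_sum_eq_imp_eq:
  fixes x :: "'a \<Rightarrow> 'b::ordered_cancel_comm_monoid_add"
  assumes "finite B" and "A \<subseteq> B" and "\<And>i. i \<in> B \<Longrightarrow> x i > 0" and "sum x A = sum x B"
  shows "A = B"
proof (rule ccontr)
  assume "A \<noteq> B"
  then obtain b where "b \<in> B - A" using assms(2) by blast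
  hence "sum x A < sum x B"
    using assms(1-3) by (intro sum_strict_mono2) (auto intro: less_imp_le)
  thus False using assms(4) by simp
qed

lemma ES_le_middle_binomial:
  assumes "\<forall>i<n. x i > 0"
  shows "ES x n \<le> n choose (n div 2)"
proof -
  let ?E = "{e \<in> {..<n} \<rightarrow>\<^sub>E {-1, 1}. (\<Sum>i<n. e i * x i) = 0}"
  let ?plus = "\<lambda>e :: nat \<Rightarrow> int. {i \<in> {..<n}. e i = 1}"
  have half: "2 * sum x (?plus e) = sum x {..<n}" if "e \<in> ?E" for e
    using that sum_sign_vector[of "{..<n}" e x] by simp
  have "inj_on ?plus ?E" by (rule inj_on_subset[OF inj_on_PiE_two_values]) blast
  hence "ES x n = card (?plus ` ?E)" unfolding ES_def by (simp add: card_image)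
  also have "\<dots> \<le> card {..<n} choose (card {..<n} div 2)"
  proof (rule sperner)
    fix A B assume A: "A \<in> ?plus ` ?E" and B: "B \<in> ?plus ` ?E" and "A \<subseteq> B"
    moreover have "sum x A = sum x B" using half A B by (smt (verit) imageE)
    moreover have "B \<subseteq> {..<n}" using B by blast
    ultimately show "A = B" using assms by (intro subset_sum_eq_imp_eq) (auto intro: finite_subset)
  qed blast+
  finally show ?thesis by simp
qed

lemma middle_binomial_square_le: "(n choose (n div 2))\<^sup>2 \<le> (2 * n) choose n"
proof -
  have "(n choose (n div 2))\<^sup>2 \<le> (\<Sum>k\<le>n. (n choose k)\<^sup>2)" by (rule member_le_sum) auto
  thus ?thesis by (simp add: choose_square_sum)
qed

lemma ES_le_sqrt_central_binomial:
  assumes "\<forall>i<n. x i > 0"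
  shows "real (ES x n) \<le> sqrt (real ((2 * n) choose n))"
proof (rule real_le_rsqrt)
  have "(ES x n)\<^sup>2 \<le> (2 * n) choose n"
    using power_mono[OF ES_le_middle_binomial[OF assms]] middle_binomial_square_le
    by (meson le_trans zero_le)
  thus "(real (ES x n))\<^sup>2 \<le> real ((2 * n) choose n)" by (metis of_nat_le_iff of_nat_power)
qed

lemma dfact_pos: "dfact n > 0"
  by (induction n rule: dfact.induct) simp_all

lemma dfact_mult_dfact_Suc: "dfact n * dfact (Suc n) = fact (Suc n)"
proof (induction n)
  case (Suc n)
  have "dfact (Suc n) * dfact (Suc (Suc n)) = Suc (Suc n) * (dfact n * dfact (Suc n))"
    by (simp add: algebra_simps)
  also have "\<dots> = fact (Suc (Suc n))" using Suc.IH by (metis fact_Suc of_nat_id)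
  finally show ?case .
qed simp

lemma dfact_double: "dfact (2 * m) = 2 ^ m * fact m"
proof (induction m)
  case (Suc m)
  have "dfact (2 * Suc m) = 2 * Suc m * dfact (2 * m)" by simp
  thus ?case using Suc.IH by (simp add: fact_Suc algebra_simps)
qed simp

lemma sqrt_dfact_quotient:
  "2 ^ m * sqrt (real (dfact (2 * m - 1)) / real (dfact (2 * m))) = sqrt (real ((2 * m) choose m))"
proof -
  have prod: "dfact (2 * m - 1) * dfact (2 * m) = ((2 * m) choose m) * fact m * fact m"
  proof (cases m)
    case (Suc k)
    hence "dfact (2 * m - 1) * dfact (2 * m) = fact (2 * m)"
      using dfact_mult_dfact_Suc[of "2 * k + 1"] by simp
    thus ?thesis using binomial_fact_lemma[of m "2 * m"] by (simp add: algebra_simps)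
  qed simp
  have "real (dfact (2 * m - 1)) / real (dfact (2 * m))
      = real (dfact (2 * m - 1) * dfact (2 * m)) / (real (dfact (2 * m)))\<^sup>2"
    using dfact_pos[of "2 * m"] by (simp add: power2_eq_square)
  also have "\<dots> = real ((2 * m) choose m) / (2 ^ m)\<^sup>2"
    unfolding prod by (simp add: dfact_double power_mult_distrib power2_eq_square)
  finally show ?thesis by (simp add: real_sqrt_divide)
qed

lemma central_binomial_eq_double:
  assumes "m \<ge> 1"
  shows "(2 * m) choose m = 2 * ((2 * m - 1) choose m)"
proof -
  obtain k where k: "m = Suc k" using assms by (cases m) auto
  have "(2 * m) choose m = ((2 * k + 1) choose k) + ((2 * k + 1) choose Suc k)"
    using k by simp
  also have "(2 * k + 1) choose k = (2 * k + 1) choose Suc k"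
    using binomial_symmetric[of k "2 * k + 1"] by simp
  finally show ?thesis using k by simp
qed

lemma J_eq_ES: "J m = ES (\<lambda>i. int (m choose i)) (Suc m)"
  unfolding J_def ES_def lessThan_Suc_atMost ..

theorem theorem3:
  fixes x :: "nat \<Rightarrow> int" and m :: nat
  assumes "m \<ge> 1" and "\<forall>i<m. x i > 0"
  shows "real (ES x m) \<le> 2 ^ m * sqrt (real (dfact (2 * m - 1)) / real (dfact (2 * m)))
       \<and> 2 ^ m * sqrt (real (dfact (2 * m - 1)) / real (dfact (2 * m)))
           = sqrt (2 * real ((2 * m - 1) choose m))
       \<and> real (J m) \<le> sqrt (2 * real ((2 * m + 1) choose (m + 1)))"
proof (intro conjI)
  show "real (ES x m) \<le> 2 ^ m * sqrt (real (dfact (2 * m - 1)) / real (dfact (2 * m)))"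
    using ES_le_sqrt_central_binomial[OF assms(2)] by (simp only: sqrt_dfact_quotient)
  show "2 ^ m * sqrt (real (dfact (2 * m - 1)) / real (dfact (2 * m)))
      = sqrt (2 * real ((2 * m - 1) choose m))"
    unfolding sqrt_dfact_quotient central_binomial_eq_double[OF assms(1)] by simp
  have "real (J m) \<le> sqrt (real ((2 * Suc m) choose Suc m))"
    unfolding J_eq_ES by (rule ES_le_sqrt_central_binomial) simp
  also have "(2 * Suc m) choose Suc m = 2 * ((2 * m + 1) choose (m + 1))"
    using central_binomial_eq_double[of "Suc m"] by simp
  finally show "real (J m) \<le> sqrt (2 * real ((2 * m + 1) choose (m + 1)))" by simp
qed

end
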